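(* Let $\mathbf{a}\in\mathbb{Z}_{\ge0}^n$ with $\mathbf{a}\neq\mathbf{0}$, let $0<\beta<1$, let $\epsilon$ satisfy $0<\epsilon<1$ and let $c_1>0$ with $0<c_1\epsilon<1$. If $1-\beta\le \dfrac{c_1\epsilon}{n\|\mathbf{a}\|_1}$, then $$(1-c_1\epsilon)\,\mathrm{Vol}(P_{\mathbf{a}})\le \mathrm{Vol}\Big(\bigcup_{k=0}^\infty Q_k\Big)\le \mathrm{Vol}(P_{\mathbf{a}}).$$
   Context: For $\mathbf{c}\in\mathbb{R}^n$, $r\ge 0$, the cross-polytope ($L_1$-ball) is $C(\mathbf{c},r)=\{\mathbf{x}\in\mathbb{R}^n:\|\mathbf{x}-\mathbf{c}\|_1\le r\}$, where $\|\mathbf{u}\|_1=\sum_i|u_i|$. $P_{\mathbf{a}}=\mathrm{conv}\{\pm\mathbf{e}_1,\dots,\pm\mathbf{e}_n,\mathbf{a}\}=\mathrm{conv}(C(\mathbf{0},1)\cup\{\mathbf{a}\})$, with $\mathbf{e}_i$ the standard basis vectors. For a parameter $0<\beta<1$ and $k=0,1,2,\dots$, $Q_k=C((1-\beta^k)\mathbf{a},\beta^k)$. *)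

theory Defs
  imports "HOL-Analysis.Analysis"
begin

definition l1norm :: "real ^ 'n \<Rightarrow> real" where
  "l1norm u = (\<Sum>i\<in>UNIV. \<bar>u $ i\<bar>)"

definition cross_polytope :: "real ^ 'n \<Rightarrow> real \<Rightarrow> (real ^ 'n) set" where
  "cross_polytope c r = {x. l1norm (x - c) \<le> r}"

definition P_a :: "real ^ 'n \<Rightarrow> (real ^ 'n) set" where
  "P_a a = convex hull (insert a {s *\<^sub>R axis i 1 | s i. s \<in> {-1, 1}})"

definition Q_k :: "real \<Rightarrow> real ^ 'n \<Rightarrow> nat \<Rightarrow> (real ^ 'n) set" where
  "Q_k \<beta> a k = cross_polytope ((1 - \<beta> ^ k) *\<^sub>R a) (\<beta> ^ k)"

end

theory Submission imports Defs begin

text \<open>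
  Since the convex hull of \<open>{\<plusminus>e\<^sub>i}\<close> is \<open>C(0,1)\<close>, the polytope \<open>P\<^sub>a\<close> is the union of the
  homothetic cross-polytopes \<open>C((1-t)a, t)\<close>, \<open>0 \<le> t \<le> 1\<close>; in particular every \<open>Q\<^sub>k\<close> lies in
  \<open>P\<^sub>a\<close>. Conversely, shrinking \<open>P\<^sub>a\<close> by the factor \<open>1 - d\<close> with \<open>d = c\<^sub>1\<epsilon>/n\<close> moves each
  \<open>C((1-t)a, t)\<close> into \<open>C((1-\<sigma>)a, (1-d)\<sigma>)\<close> with \<open>\<sigma> \<ge> d\<close>; choosing \<open>k\<close> with
  \<open>\<beta>\<^sup>k\<^sup>+\<^sup>1 < \<sigma> \<le> \<beta>\<^sup>k\<close>, the slack \<open>d\<beta>\<^sup>k\<close> in the radius absorbs the shift of the centre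
  by \<open>(\<beta>\<^sup>k - \<sigma>)\<parallel>a\<parallel>\<^sub>1 \<le> \<beta>\<^sup>k(1-\<beta>)\<parallel>a\<parallel>\<^sub>1 \<le> d\<beta>\<^sup>k\<close>, so the shrunken copy lies in \<open>Q\<^sub>k\<close>.
  Hence \<open>(1-d)\<^sup>n Vol(P\<^sub>a) \<le> Vol(\<Union>Q\<^sub>k)\<close>, and Bernoulli's inequality gives \<open>(1-d)\<^sup>n \<ge> 1 - c\<^sub>1\<epsilon>\<close>.
\<close>

lemma l1norm_nonneg: "0 \<le> l1norm u"
  unfolding l1norm_def by (simp add: sum_nonneg)

lemma l1norm_triangle: "l1norm (u + v) \<le> l1norm u + l1norm v"
  unfolding l1norm_def by (simp add: sum.distrib[symmetric] sum_mono abs_triangle_ineq)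

lemma l1norm_scaleR: "l1norm (c *\<^sub>R u) = \<bar>c\<bar> * l1norm u"
  unfolding l1norm_def by (simp add: sum_distrib_left abs_mult)

lemma l1norm_eq_0_iff: "l1norm (u :: real ^ 'n) = 0 \<longleftrightarrow> u = 0"
  unfolding l1norm_def by (simp add: sum_nonneg_eq_0_iff vec_eq_iff)

lemma l1norm_scaled_axis: "l1norm (s *\<^sub>R axis i 1 :: real ^ 'n) = \<bar>s\<bar>"
  unfolding l1norm_def by (simp add: axis_def abs_mult if_distrib cong: if_cong)

lemma closed_cross_polytope: "closed (cross_polytope c r)"
  unfolding cross_polytope_def l1norm_def by (intro closed_Collect_le continuous_intros)

lemma convex_cross_polytope: "convex (cross_polytope (c :: real ^ 'n) r)"
proof (rule convexI)
  fix x y :: "real ^ 'n" and u v :: real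
  assume xy: "x \<in> cross_polytope c r" "y \<in> cross_polytope c r"
    and uv: "0 \<le> u" "0 \<le> v" "u + v = 1"
  have "u *\<^sub>R x + v *\<^sub>R y - c = u *\<^sub>R (x - c) + v *\<^sub>R (y - c)"
    using uv(3) by (simp add: algebra_simps flip: scaleR_add_left)
  then have "l1norm (u *\<^sub>R x + v *\<^sub>R y - c) \<le> u * l1norm (x - c) + v * l1norm (y - c)"
    using l1norm_triangle[of "u *\<^sub>R (x - c)" "v *\<^sub>R (y - c)"] uv by (simp add: l1norm_scaleR)
  also have "\<dots> \<le> u * r + v * r"
    using xy uv by (intro add_mono mult_left_mono) (auto simp: cross_polytope_def)
  finally show "u *\<^sub>R x + v *\<^sub>R y \<in> cross_polytope c r"
    using uv(3) by (simp add: cross_polytope_def distrib_right[symmetric])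
qed

lemma convex_hull_signed_axes:
  "convex hull {s *\<^sub>R axis i 1 | s i. s \<in> {-1, 1 :: real}} = cross_polytope (0 :: real ^ 'n) 1"
  (is "convex hull ?S = ?C")
proof
  have "?S \<subseteq> ?C"
    using l1norm_scaled_axis[where 'n = 'n] by (force simp: cross_polytope_def)
  then show "convex hull ?S \<subseteq> ?C"
    by (rule hull_minimal) (rule convex_cross_polytope)
next
  let ?K = "convex hull ?S"
  have signed_axis_in_K: "s \<in> {-1, 1} \<Longrightarrow> s *\<^sub>R axis i 1 \<in> ?K" for s i
    by (rule hull_inc) blast
  have zero_in_K: "0 \<in> ?K"
    using convexD[OF convex_convex_hull, of "axis undefined 1" ?S "- axis undefined 1" "1/2" "1/2"]
      signed_axis_in_K[of 1 undefined] signed_axis_in_K[of "-1" undefined] by simp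
  show "?C \<subseteq> ?K"
  proof
    fix x :: "real ^ 'n"
    assume x: "x \<in> ?C"
    define L where "L = l1norm x"
    show "x \<in> ?K"
    proof (cases "L = 0")
      case True
      then show ?thesis using zero_in_K by (simp add: L_def l1norm_eq_0_iff)
    next
      case False
      then have L: "0 < L" "L \<le> 1"
        using l1norm_nonneg[of x] x by (auto simp: L_def cross_polytope_def)
      define p where "p i = sgn (x $ i) *\<^sub>R axis i (1 :: real)" for i
      have p_in_K: "p i \<in> ?K" for i
        using zero_in_K signed_axis_in_K[of "-1" i] signed_axis_in_K[of 1 i]
        by (auto simp: p_def sgn_if)
      \<comment> \<open>\<open>x / L\<close> is a convex combination of the \<open>sgn(x\<^sub>i) e\<^sub>i\<close>, and \<open>x\<close> lies between it and \<open>0\<close>.\<close>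
      have "(\<Sum>i\<in>UNIV. (\<bar>x $ i\<bar> / L) *\<^sub>R p i) \<in> ?K"
        using L p_in_K
        by (intro convex_sum) (auto simp: L_def l1norm_def sum_divide_distrib[symmetric])
      then have "L *\<^sub>R (\<Sum>i\<in>UNIV. (\<bar>x $ i\<bar> / L) *\<^sub>R p i) + (1 - L) *\<^sub>R 0 \<in> ?K"
        using L by (intro convexD zero_in_K) auto
      moreover have "L *\<^sub>R (\<Sum>i\<in>UNIV. (\<bar>x $ i\<bar> / L) *\<^sub>R p i) = x"
        using L by (simp add: scaleR_sum_right p_def abs_mult_sgn vec_eq_iff sum_component
            axis_def if_distrib cong: if_cong)
      ultimately show ?thesis by simp
    qed
  qed
qed

lemma mem_homothetic_cross_polytope_iff:
  assumes "0 \<le> t"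
  shows "x \<in> cross_polytope ((1 - t) *\<^sub>R a) t
           \<longleftrightarrow> (\<exists>b \<in> cross_polytope 0 1. x = (1 - t) *\<^sub>R a + t *\<^sub>R b)"
proof
  assume x: "x \<in> cross_polytope ((1 - t) *\<^sub>R a) t"
  define b where "b = (1 / t) *\<^sub>R (x - (1 - t) *\<^sub>R a)"
  have "b \<in> cross_polytope 0 1"
    using assms x by (auto simp: cross_polytope_def b_def l1norm_scaleR divide_le_eq_1)
  moreover have "x = (1 - t) *\<^sub>R a + t *\<^sub>R b"
  proof (cases "t = 0")
    case True
    then show ?thesis
      using x l1norm_nonneg[of "x - a"] by (simp add: cross_polytope_def l1norm_eq_0_iff)
  qed (simp add: b_def)
  ultimately show "\<exists>b \<in> cross_polytope 0 1. x = (1 - t) *\<^sub>R a + t *\<^sub>R b" ..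
next
  assume "\<exists>b \<in> cross_polytope 0 1. x = (1 - t) *\<^sub>R a + t *\<^sub>R b"
  then obtain b where "l1norm b \<le> 1" "x = (1 - t) *\<^sub>R a + t *\<^sub>R b"
    by (auto simp: cross_polytope_def)
  then show "x \<in> cross_polytope ((1 - t) *\<^sub>R a) t"
    using assms mult_left_mono[of "l1norm b" 1 t] by (simp add: cross_polytope_def l1norm_scaleR)
qed

lemma P_a_eq_Union_cross_polytope:
  fixes a :: "real ^ 'n"
  shows "P_a a = (\<Union>t\<in>{0..1}. cross_polytope ((1 - t) *\<^sub>R a) t)"
proof -
  have "{s *\<^sub>R axis i 1 | s i. s \<in> {-1, 1 :: real}} \<noteq> ({} :: (real ^ 'n) set)"
    by blast
  then have "P_a a = {(1 - t) *\<^sub>R a + t *\<^sub>R b | b t. 0 \<le> t \<and> t \<le> 1 \<and> b \<in> cross_polytope 0 1}"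
    unfolding P_a_def convex_hull_insert_alt convex_hull_signed_axes by (simp only: if_False)
  also have "\<dots> = (\<Union>t\<in>{0..1}. cross_polytope ((1 - t) *\<^sub>R a) t)"
    by (auto simp: mem_homothetic_cross_polytope_iff) force+
  finally show ?thesis .
qed

lemma compact_P_a: "compact (P_a (a :: real ^ 'n))"
proof -
  have signed_axes: "{s *\<^sub>R axis i 1 :: real ^ 'n | s i. s \<in> {-1, 1}}
      = (\<lambda>(s, i). s *\<^sub>R axis i 1) ` ({-1, 1} \<times> UNIV)"
    by auto
  have "finite {s *\<^sub>R axis i 1 :: real ^ 'n | s i. s \<in> {-1, 1}}"
    by (subst signed_axes) simp
  then show ?thesis
    unfolding P_a_def by (intro finite_imp_compact_convex_hull finite.insertI)
qed

lemma Q_k_subset_P_a: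
  assumes "0 \<le> \<beta>" "\<beta> \<le> 1"
  shows "Q_k \<beta> a k \<subseteq> P_a a"
  unfolding P_a_eq_Union_cross_polytope Q_k_def
  using assms by (intro subsetI UN_I[of "\<beta> ^ k"]) (auto intro: power_le_one)

lemma sets_lebesgue_Union_Q_k: "(\<Union>k. Q_k \<beta> (a :: real ^ 'n) k) \<in> sets lebesgue"
  unfolding Q_k_def
  by (auto intro!: sets.countable_UN sets_completionI_sets borel_closed closed_cross_polytope)

lemma power_bracket:
  fixes \<beta> \<sigma> :: real
  assumes "0 < \<beta>" "\<beta> < 1" "0 < \<sigma>" "\<sigma> \<le> 1"
  obtains k where "\<beta> ^ Suc k < \<sigma>" "\<sigma> \<le> \<beta> ^ k"
proof -
  obtain m where "\<beta> ^ m < \<sigma>"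
    using real_arch_pow_inv[of \<sigma> \<beta>] assms by blast
  then show ?thesis
    using ex_least_nat_less[of "\<lambda>m. \<beta> ^ m < \<sigma>" m] assms that by force
qed

lemma scaled_P_a_subset_Union_Q_k:
  fixes a :: "real ^ 'n"
  assumes \<beta>: "0 < \<beta>" "\<beta> < 1" and d: "0 < d" "d \<le> 1"
    and shift: "l1norm a * (1 - \<beta>) \<le> d"
  shows "(\<lambda>x. (1 - d) *\<^sub>R x) ` P_a a \<subseteq> (\<Union>k. Q_k \<beta> a k)"
proof clarify
  fix x
  assume "x \<in> P_a a"
  then obtain s where s: "0 \<le> s" "s \<le> 1" and x: "l1norm (x - (1 - s) *\<^sub>R a) \<le> s"
    by (auto simp: P_a_eq_Union_cross_polytope cross_polytope_def)
  define \<sigma> where "\<sigma> = d + (1 - d) * s"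
  have \<sigma>: "0 < \<sigma>" "\<sigma> \<le> 1" "s \<le> \<sigma>"
    using s d mult_left_le_one_le[of s d] mult_nonneg_nonneg[of "1 - d" "1 - s"]
    by (auto simp: \<sigma>_def algebra_simps)
  have centre: "l1norm ((1 - d) *\<^sub>R x - (1 - \<sigma>) *\<^sub>R a) \<le> (1 - d) * \<sigma>"
  proof -
    have "(1 - d) *\<^sub>R x - (1 - \<sigma>) *\<^sub>R a = (1 - d) *\<^sub>R (x - (1 - s) *\<^sub>R a)"
      by (simp add: \<sigma>_def algebra_simps)
    then show ?thesis
      using x \<sigma>(3) d by (simp add: l1norm_scaleR mult_left_mono)
  qed
  obtain k where k: "\<beta> ^ Suc k < \<sigma>" "\<sigma> \<le> \<beta> ^ k"
    using power_bracket \<beta> \<sigma>(1,2) by blast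
  define t where "t = \<beta> ^ k"
  have "l1norm ((1 - d) *\<^sub>R x - (1 - t) *\<^sub>R a)
        \<le> l1norm ((1 - d) *\<^sub>R x - (1 - \<sigma>) *\<^sub>R a) + (t - \<sigma>) * l1norm a"
  proof -
    have "(1 - d) *\<^sub>R x - (1 - t) *\<^sub>R a = ((1 - d) *\<^sub>R x - (1 - \<sigma>) *\<^sub>R a) + (t - \<sigma>) *\<^sub>R a"
      by (simp add: algebra_simps)
    then have "l1norm ((1 - d) *\<^sub>R x - (1 - t) *\<^sub>R a)
        \<le> l1norm ((1 - d) *\<^sub>R x - (1 - \<sigma>) *\<^sub>R a) + l1norm ((t - \<sigma>) *\<^sub>R a)"
      by (simp only: l1norm_triangle)
    then show ?thesis
      using k(2) by (simp add: t_def l1norm_scaleR)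
  qed
  also have "\<dots> \<le> (1 - d) * t + t * (l1norm a * (1 - \<beta>))"
  proof -
    have "(1 - d) * \<sigma> \<le> (1 - d) * t"
      using k(2) d by (intro mult_left_mono) (auto simp: t_def)
    moreover have "(t - \<sigma>) * l1norm a \<le> t * (1 - \<beta>) * l1norm a"
      using k(1) l1norm_nonneg[of a] by (intro mult_right_mono) (auto simp: t_def algebra_simps)
    ultimately show ?thesis
      using centre by (simp add: algebra_simps)
  qed
  also have "\<dots> \<le> t"
    using mult_left_mono[OF shift, of t] \<beta> by (simp add: t_def algebra_simps)
  finally have "(1 - d) *\<^sub>R x \<in> Q_k \<beta> a k"
    by (simp add: Q_k_def cross_polytope_def t_def)
  then show "(1 - d) *\<^sub>R x \<in> (\<Union>k. Q_k \<beta> a k)" by blast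
qed

theorem mainTheorem2:
  fixes a :: "real ^ 'n" and \<beta> \<epsilon> c1 :: real
  assumes a_int: "\<forall>i. a $ i \<in> \<int> \<and> a $ i \<ge> 0"
    and a_nz: "a \<noteq> 0"
    and beta: "0 < \<beta>" "\<beta> < 1"
    and eps: "0 < \<epsilon>" "\<epsilon> < 1"
    and c1: "c1 > 0" "0 < c1 * \<epsilon>" "c1 * \<epsilon> < 1"
    and hb: "1 - \<beta> \<le> c1 * \<epsilon> / (real CARD('n) * l1norm a)"
  shows "(1 - c1 * \<epsilon>) * measure lebesgue (P_a a)
           \<le> measure lebesgue (\<Union>k. Q_k \<beta> a k)
         \<and> measure lebesgue (\<Union>k. Q_k \<beta> a k) \<le> measure lebesgue (P_a a)"
proof -
  define d where "d = c1 * \<epsilon> / CARD('n)"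
  define U where "U = (\<Union>k. Q_k \<beta> a k)"
  have "c1 * \<epsilon> \<le> real CARD('n)"
    using c1(3) zero_less_card_finite[where 'a = 'n] by linarith
  then have d: "0 < d" "d \<le> 1" "CARD('n) * d = c1 * \<epsilon>"
    using c1 by (auto simp: d_def divide_le_eq)
  have shift: "l1norm a * (1 - \<beta>) \<le> d"
    using hb a_nz l1norm_nonneg[of a] l1norm_eq_0_iff[of a]
    by (simp add: d_def le_divide_eq mult.commute mult.left_commute)
  have P: "P_a a \<in> lmeasurable"
    by (rule lmeasurable_compact[OF compact_P_a])
  have U: "U \<in> sets lebesgue" "U \<subseteq> P_a a"
    using sets_lebesgue_Union_Q_k Q_k_subset_P_a[of \<beta> a] beta by (auto simp: U_def)
  have shrunk: "(\<lambda>x. (1 - d) *\<^sub>R x + 0) ` P_a a \<in> lmeasurable"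
    using lmeasurable_compact[OF compact_scaling[OF compact_P_a]] by simp
  have "(1 - c1 * \<epsilon>) * measure lebesgue (P_a a) \<le> (1 - d) ^ CARD('n) * measure lebesgue (P_a a)"
    using Bernoulli_inequality[of "- d" "CARD('n)"] d by (intro mult_right_mono) auto
  also have "\<dots> = measure lebesgue ((\<lambda>x. (1 - d) *\<^sub>R x + 0) ` P_a a)"
    using measure_lebesgue_affine[of "1 - d" 0 "P_a a"] d by simp
  also have "\<dots> \<le> measure lebesgue U"
    using scaled_P_a_subset_Union_Q_k[OF beta d(1,2) shift] shrunk fmeasurableI2[OF P U(2,1)]
    by (intro measure_mono_fmeasurable) (auto simp: U_def)
  finally show ?thesis
    using measure_mono_fmeasurable[OF U(2,1) P] by (simp add: U_def)
qed

end
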